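(* Let $\Pi$ be an $n$-dimensional linear space satisfying the exchange axiom and the axiom (P2), let $0<k<n-1$, let $B=\{p_1,\dots,p_{n+1}\}$ be a base of $\Pi$, let $\mathcal{B}_k$ be the base subset of $\mathcal{G}_k(\Pi)$ associated with $B$, and put $m=\max\{k,n-k-1\}$. Two distinct elements $U,U'$ of $\mathcal{B}_k$ are adjacent if and only if there exists a regular collection $\mathcal{R}^1,\dots,\mathcal{R}^m$ of $m$ complement subsets of $\mathcal{B}_k$ such that $U$ and $U'$ belong to each $\mathcal{R}^i$, $i=1,\dots,m$.
   Context: A linear space $\Pi=(P,\mathcal{L})$ is a set $P$ of points with a family $\mathcal{L}$ of proper subsets (lines) such that each line has at least two points and any two distinct points $p,q$ lie on exactly one line $pq$. A subspace is a set $S\subset P$ with $pq\subset S$ for all distinct $p,q\in S$; $\overline{X}$ is the smallest subspace containing $X$. A set $X$ is independent if $\overline{X}$ is not spanned by a proper subset of $X$; a base of $\Pi$ is an independent set spanning $P$. A subspace is $m$-dimensional if $m+1$ is the smallest number of points spanning it. Exchange axiom: for every $X\subset P$ and $p_1,p_2\in P\setminus\overline{X}$, $p_2\in\overline{X\cup\{p_1\}}$ implies $p_1\in\overline{X\cup\{p_2\}}$. Axiom (P2): every line has at least three points. $\mathcal{G}_k(\Pi)$ is the set of $k$-dimensional subspaces; two of them are adjacent if their intersection is $(k-1)$-dimensional. The base subset of $\mathcal{G}_k(\Pi)$ associated with a base $B$ is the set of all $k$-dimensional subspaces spanned by points of $B$. A subset $\mathcal{R}\subset\mathcal{B}_k$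 is exact if $\mathcal{B}_k$ is the unique base subset of $\mathcal{G}_k(\Pi)$ containing $\mathcal{R}$, and inexact otherwise. A complement subset of $\mathcal{B}_k$ is a set $\mathcal{R}\subset\mathcal{B}_k$ such that $\mathcal{B}_k\setminus\mathcal{R}$ is a maximal (under inclusion) inexact subset of $\mathcal{B}_k$. A collection $\mathcal{R}^1,\dots,\mathcal{R}^{m+1}$ of $m+1$ complement subsets is regular if $\mathcal{R}^1\cap\dots\cap\mathcal{R}^{m+1}$ consists of exactly one element; a collection of $m$ complement subsets is regular if it can be extended (by one more complement subset) to a regular collection of $m+1$ complement subsets. *)

theory Defs
  imports Main
begin

definition linear_space :: "'a set \<Rightarrow> 'a set set \<Rightarrow> bool" where
  "linear_space P L \<longleftrightarrow>
     (\<forall>l\<in>L. l \<subset> P \<and> (\<exists>p\<in>l. \<exists>q\<in>l. p \<noteq> q)) \<and>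
     (\<forall>p\<in>P. \<forall>q\<in>P. p \<noteq> q \<longrightarrow> (\<exists>!l. l \<in> L \<and> p \<in> l \<and> q \<in> l))"

definition subspace :: "'a set \<Rightarrow> 'a set set \<Rightarrow> 'a set \<Rightarrow> bool" where
  "subspace P L S \<longleftrightarrow> S \<subseteq> P \<and>
     (\<forall>l\<in>L. \<forall>p\<in>S. \<forall>q\<in>S. p \<noteq> q \<and> p \<in> l \<and> q \<in> l \<longrightarrow> l \<subseteq> S)"

definition span :: "'a set \<Rightarrow> 'a set set \<Rightarrow> 'a set \<Rightarrow> 'a set" where
  "span P L X = \<Inter>{S. subspace P L S \<and> X \<subseteq> S}"

definition independent :: "'a set \<Rightarrow> 'a set set \<Rightarrow> 'a set \<Rightarrow> bool" where
  "independent P L X \<longleftrightarrow> X \<subseteq> P \<and> (\<forall>Y. Y \<subset> X \<longrightarrow> span P L Y \<noteq> span P L X)"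

definition is_base :: "'a set \<Rightarrow> 'a set set \<Rightarrow> 'a set \<Rightarrow> bool" where
  "is_base P L B \<longleftrightarrow> independent P L B \<and> span P L B = P"

definition has_dim :: "'a set \<Rightarrow> 'a set set \<Rightarrow> 'a set \<Rightarrow> nat \<Rightarrow> bool" where
  "has_dim P L S m \<longleftrightarrow> subspace P L S \<and>
     (\<exists>X. X \<subseteq> P \<and> finite X \<and> card X = m + 1 \<and> span P L X = S) \<and>
     (\<forall>X. X \<subseteq> P \<and> finite X \<and> span P L X = S \<longrightarrow> m + 1 \<le> card X)"

definition exchange_axiom :: "'a set \<Rightarrow> 'a set set \<Rightarrow> bool" where
  "exchange_axiom P L \<longleftrightarrow>
     (\<forall>X p1 p2. X \<subseteq> P \<and> p1 \<in> P - span P L X \<and> p2 \<in> P - span P L X \<and>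
        p2 \<in> span P L (insert p1 X) \<longrightarrow> p1 \<in> span P L (insert p2 X))"

definition axiom_P2 :: "'a set set \<Rightarrow> bool" where
  "axiom_P2 L \<longleftrightarrow> (\<forall>l\<in>L. \<exists>a\<in>l. \<exists>b\<in>l. \<exists>c\<in>l. a \<noteq> b \<and> a \<noteq> c \<and> b \<noteq> c)"

definition grass :: "'a set \<Rightarrow> 'a set set \<Rightarrow> nat \<Rightarrow> 'a set set" where
  "grass P L k = {S. has_dim P L S k}"

definition adjacent :: "'a set \<Rightarrow> 'a set set \<Rightarrow> nat \<Rightarrow> 'a set \<Rightarrow> 'a set \<Rightarrow> bool" where
  "adjacent P L k U U' \<longleftrightarrow> has_dim P L U k \<and> has_dim P L U' k \<and> has_dim P L (U \<inter> U') (k - 1)"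

definition base_subset :: "'a set \<Rightarrow> 'a set set \<Rightarrow> nat \<Rightarrow> 'a set \<Rightarrow> 'a set set" where
  "base_subset P L k B = {S \<in> grass P L k. \<exists>X. X \<subseteq> B \<and> span P L X = S}"

definition exact :: "'a set \<Rightarrow> 'a set set \<Rightarrow> nat \<Rightarrow> 'a set \<Rightarrow> 'a set set \<Rightarrow> bool" where
  "exact P L k B R \<longleftrightarrow> R \<subseteq> base_subset P L k B \<and>
     (\<forall>B'. is_base P L B' \<and> R \<subseteq> base_subset P L k B' \<longrightarrow> base_subset P L k B' = base_subset P L k B)"

definition inexact :: "'a set \<Rightarrow> 'a set set \<Rightarrow> nat \<Rightarrow> 'a set \<Rightarrow> 'a set set \<Rightarrow> bool" where
  "inexact P L k B R \<longleftrightarrow> R \<subseteq> base_subset P L k B \<and> \<not> exact P L k B R"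

definition maximal_inexact :: "'a set \<Rightarrow> 'a set set \<Rightarrow> nat \<Rightarrow> 'a set \<Rightarrow> 'a set set \<Rightarrow> bool" where
  "maximal_inexact P L k B R \<longleftrightarrow> inexact P L k B R \<and>
     (\<forall>R'. R \<subset> R' \<and> R' \<subseteq> base_subset P L k B \<longrightarrow> \<not> inexact P L k B R')"

definition complement_subset :: "'a set \<Rightarrow> 'a set set \<Rightarrow> nat \<Rightarrow> 'a set \<Rightarrow> 'a set set \<Rightarrow> bool" where
  "complement_subset P L k B R \<longleftrightarrow> R \<subseteq> base_subset P L k B \<and>
     maximal_inexact P L k B (base_subset P L k B - R)"

definition regular_full :: "'a set \<Rightarrow> 'a set set \<Rightarrow> nat \<Rightarrow> 'a set \<Rightarrow> nat \<Rightarrow> 'a set set set \<Rightarrow> bool" where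
  "regular_full P L k B m C \<longleftrightarrow> finite C \<and> card C = m + 1 \<and>
     (\<forall>R\<in>C. complement_subset P L k B R) \<and> (\<exists>U. \<Inter>C = {U})"

definition regular :: "'a set \<Rightarrow> 'a set set \<Rightarrow> nat \<Rightarrow> 'a set \<Rightarrow> nat \<Rightarrow> 'a set set set \<Rightarrow> bool" where
  "regular P L k B m C \<longleftrightarrow> finite C \<and> card C = m \<and>
     (\<forall>R\<in>C. complement_subset P L k B R) \<and>
     (\<exists>R. complement_subset P L k B R \<and> R \<notin> C \<and> regular_full P L k B m (insert R C))"

end

theory Submission
  imports Defs
begin

(* By the exchange axiom, spans of subsets of a base B behave like the subsets themselves:
   span X \<inter> span Y = span (X \<inter> Y), span X \<inter> B = X, and span X has dimension card X - 1.
   So B_k is a copy of the (k+1)-subsets of B, and U, U' \<in> B_k are adjacent iff they share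
   k points of B.
   The complement subsets of B_k are exactly the sets through_avoiding a b (a \<noteq> b in B): a subset
   of B_k lies in no other base subset iff it meets all of them, while B_k - through_avoiding a b
   also lies in the base subset of the base obtained by replacing a with a third point of the
   line ab, which exists by (P2).
   An intersection of sets through_avoiding a b consists of the spans of the (k+1)-subsets of B
   containing every a and no b.  If U = span (insert x I) and U' share the k points I of B, the
   sets through_avoiding a b for m pairs (a, b) \<in> I \<times> (B - (U \<union> U')) covering I, together
   with through_avoiding x b, cut out exactly U.  If U and U' share fewer points of B, every such
   intersection that contains them both, plus one more set, leaves at least two candidates. *)

lemma span_mono: "X \<subseteq> Y \<Longrightarrow> span P L X \<subseteq> span P L Y"
  unfolding span_def by blast

lemma span_least: "subspace P L S \<Longrightarrow> X \<subseteq> S \<Longrightarrow> span P L X \<subseteq> S"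
  unfolding span_def by blast

lemma span_empty: "span P L {} = {}"
  using span_least[of P L "{}" "{}"] unfolding subspace_def by blast

lemma exact_mono:
  assumes "exact P L k B S" "S \<subseteq> S'" "S' \<subseteq> base_subset P L k B"
  shows "exact P L k B S'"
  using assms unfolding exact_def by blast

lemma two_subsets_between:
  assumes "finite S" "A \<subseteq> S" "card A < c" "c < card S"
  obtains Y1 Y2 where "Y1 \<noteq> Y2" "A \<subseteq> Y1" "Y1 \<subseteq> S" "card Y1 = c" "A \<subseteq> Y2" "Y2 \<subseteq> S" "card Y2 = c"
proof -
  obtain Y1 where Y1: "A \<subseteq> Y1" "Y1 \<subseteq> S" "card Y1 = c"
    using exists_subset_between[of A c S] assms by auto
  have "\<not> S \<subseteq> Y1"
    using Y1 assms(4) by (metis less_irrefl subset_antisym)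
  then obtain e where e: "e \<in> S" "e \<notin> Y1"
    by blast
  have "card (insert e A) \<le> c"
    using assms(3) card_insert_le_m1[of c A e] by linarith
  then obtain Y2 where Y2: "insert e A \<subseteq> Y2" "Y2 \<subseteq> S" "card Y2 = c"
    using exists_subset_between[of "insert e A" c S] assms e by auto
  show thesis
    by (rule that[of Y1 Y2]) (use Y1 Y2 e in auto)
qed

lemma exists_pairs_between:
  assumes "finite I" "finite J" "b \<in> J" "card I \<le> m" "m \<le> card I * card J"
  obtains T where "I \<times> {b} \<subseteq> T" "T \<subseteq> I \<times> J" "card T = m"
  using exists_subset_between[of "I \<times> {b}" m "I \<times> J"] assms
  by (auto simp: card_cartesian_product)

lemma card_subset_insert_le: "finite X \<Longrightarrow> A \<subseteq> insert x X \<Longrightarrow> card A \<le> card X + 1"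
  using card_mono[of "insert x X" A] card_insert_le_m1[of "card X + 1" X x] by simp

section \<open>Spans in a linear space with the exchange axiom\<close>

locale exchange_space =
  fixes P :: "'a set" and L :: "'a set set"
  assumes linear: "linear_space P L" and exchange: "exchange_axiom P L"
begin

abbreviation sp :: "'a set \<Rightarrow> 'a set" where "sp X \<equiv> span P L X"

lemma span_superset: "X \<subseteq> sp X"
  unfolding span_def by blast

lemma subspace_carrier: "subspace P L P"
  using linear unfolding linear_space_def subspace_def by blast

lemma span_subset_carrier: "X \<subseteq> P \<Longrightarrow> sp X \<subseteq> P"
  using span_least[OF subspace_carrier] .

lemma subspace_span: "X \<subseteq> P \<Longrightarrow> subspace P L (sp X)"
  using span_subset_carrier unfolding subspace_def span_def by blast

lemma span_subset_spanI: "X \<subseteq> P \<Longrightarrow> Y \<subseteq> sp X \<Longrightarrow> sp Y \<subseteq> sp X"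
  using span_least subspace_span by blast

lemma span_singleton: "p \<in> P \<Longrightarrow> sp {p} = {p}"
  using span_least[of P L "{p}" "{p}"] span_superset[of "{p}"] unfolding subspace_def by blast

lemma span_eq_singletonD:
  assumes "X \<subseteq> P" "sp X = {p}"
  shows "X = {p}"
proof -
  have "X \<noteq> {}"
    using assms(2) span_empty[of P L] by auto
  then show ?thesis
    using assms(2) span_superset[of X] by (simp add: subset_singleton_iff)
qed

lemma exchange_point:
  assumes "Z \<subseteq> P" "p \<in> P - sp Z" "q \<in> P - sp Z" "q \<in> sp (insert p Z)"
  shows "p \<in> sp (insert q Z)"
  using exchange assms unfolding exchange_axiom_def by blast

lemma span_insert_exchange:
  assumes "Z \<subseteq> P" "p \<in> P - sp Z" "q \<in> P - sp Z" "q \<in> sp (insert p Z)"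
  shows "sp (insert q Z) = sp (insert p Z)"
proof
  show "sp (insert q Z) \<subseteq> sp (insert p Z)"
    using assms span_superset[of "insert p Z"] by (intro span_subset_spanI) auto
  have "p \<in> sp (insert q Z)"
    using exchange_point[OF assms] .
  then show "sp (insert p Z) \<subseteq> sp (insert q Z)"
    using assms span_superset[of "insert q Z"] by (intro span_subset_spanI) auto
qed

lemma independent_iff: "independent P L X \<longleftrightarrow> X \<subseteq> P \<and> (\<forall>x\<in>X. x \<notin> sp (X - {x}))"
proof
  assume indep: "independent P L X"
  have "x \<notin> sp (X - {x})" if "x \<in> X" for x
  proof
    assume "x \<in> sp (X - {x})"
    then have "sp X \<subseteq> sp (X - {x})"
      using indep span_superset[of "X - {x}"] unfolding independent_def
      by (intro span_subset_spanI) auto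
    then have "sp (X - {x}) = sp X"
      by (simp add: span_mono subset_antisym)
    then show False
      using indep \<open>x \<in> X\<close> unfolding independent_def by blast
  qed
  then show "X \<subseteq> P \<and> (\<forall>x\<in>X. x \<notin> sp (X - {x}))"
    using indep unfolding independent_def by blast
next
  assume X: "X \<subseteq> P \<and> (\<forall>x\<in>X. x \<notin> sp (X - {x}))"
  have "sp Y \<noteq> sp X" if "Y \<subset> X" for Y
  proof -
    obtain x where "x \<in> X" "x \<notin> Y"
      using \<open>Y \<subset> X\<close> by blast
    moreover have "sp Y \<subseteq> sp (X - {x})"
      using \<open>Y \<subset> X\<close> \<open>x \<notin> Y\<close> by (intro span_mono) blast
    ultimately show ?thesis
      using X span_superset[of X] by blast
  qed
  then show "independent P L X"
    using X unfolding independent_def by blast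
qed

lemma independent_subset_carrier: "independent P L X \<Longrightarrow> X \<subseteq> P"
  unfolding independent_def by blast

lemma independent_not_in_span: "independent P L X \<Longrightarrow> x \<in> X \<Longrightarrow> Y \<subseteq> X - {x} \<Longrightarrow> x \<notin> sp Y"
  using independent_iff span_mono by blast

lemma independent_subset: "independent P L X \<Longrightarrow> Y \<subseteq> X \<Longrightarrow> independent P L Y"
  unfolding independent_iff using span_mono by (metis Diff_mono subset_iff)

lemma independent_insert:
  assumes indep: "independent P L I" and y: "y \<in> P" "y \<notin> sp I"
  shows "independent P L (insert y I)"
  unfolding independent_iff
proof (intro conjI ballI)
  have I: "I \<subseteq> P"
    using indep by (rule independent_subset_carrier)
  then show "insert y I \<subseteq> P"
    using y by blast
  fix z assume z: "z \<in> insert y I"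
  show "z \<notin> sp (insert y I - {z})"
  proof (cases "z = y")
    case True
    have "sp (I - {y}) \<subseteq> sp I"
      by (rule span_mono) blast
    then show ?thesis
      using True y(2) by auto
  next
    case False
    then have zI: "z \<in> I" and eq: "insert y I - {z} = insert y (I - {z})"
      using z by auto
    have "sp (I - {z}) \<subseteq> sp I"
      by (rule span_mono) blast
    then have "y \<in> P - sp (I - {z})"
      using y by blast
    moreover have "z \<in> P - sp (I - {z})"
      using independent_not_in_span[OF indep zI, of "I - {z}"] I zI by blast
    moreover have "y \<notin> sp (insert z (I - {z}))"
      using y(2) zI by (simp add: insert_absorb)
    moreover have "I - {z} \<subseteq> P"
      using I by blast
    \<comment> \<open>z in the span of insert y (I - {z}) would, by exchange, put y in the span of I\<close>
    ultimately show ?thesis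
      using exchange_point[of "I - {z}" y z] eq by metis
  qed
qed

lemma independent_exchange_into_span:
  assumes indep: "independent P L X" and "x \<in> X" "X \<subseteq> sp Y" "Y \<subseteq> P"
  obtains y where "y \<in> Y" "y \<notin> X - {x}" "independent P L (insert y (X - {x}))"
proof -
  have XP: "X \<subseteq> P"
    using indep by (rule independent_subset_carrier)
  have "\<not> Y \<subseteq> sp (X - {x})"
  proof
    assume "Y \<subseteq> sp (X - {x})"
    then have "sp Y \<subseteq> sp (X - {x})"
      using XP by (intro span_subset_spanI) auto
    then show False
      using assms(2,3) indep by (auto simp: independent_iff)
  qed
  then obtain y where y: "y \<in> Y" "y \<notin> sp (X - {x})"
    by blast
  have "y \<notin> X - {x}"
    using y span_superset[of "X - {x}"] by blast
  moreover have "independent P L (insert y (X - {x}))"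
    using y assms(4) by (intro independent_insert independent_subset[OF indep]) auto
  ultimately show thesis
    by (rule that[OF y(1)])
qed

lemma independent_span_bound_finite:
  assumes "finite X" "independent P L X" "X \<subseteq> sp Y" "finite Y" "Y \<subseteq> P"
  shows "card X \<le> card Y"
  using assms
proof (induction "card (X - Y)" arbitrary: X rule: less_induct)
  case less
  show ?case
  proof (cases "X \<subseteq> Y")
    case True
    then show ?thesis
      using less.prems(4) by (rule card_mono[rotated])
  next
    case False
    then obtain x where x: "x \<in> X" "x \<notin> Y"
      by blast
    then obtain y where y: "y \<in> Y" "y \<notin> X - {x}" and indep: "independent P L (insert y (X - {x}))"
      using independent_exchange_into_span less.prems(2,3,5) by metis
    define X' where "X' = insert y (X - {x})"
    have "card X' = Suc (card (X - {x}))"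
      using less.prems(1) y(2) by (simp add: X'_def)
    then have "card X' = card X"
      using less.prems(1) x(1) by (metis card_Suc_Diff1)
    moreover have "X' - Y = (X - Y) - {x}"
      using y(1) by (auto simp: X'_def)
    then have "card (X' - Y) < card (X - Y)"
      using x less.prems(1) by (metis DiffI card_Diff1_less finite_Diff)
    moreover have "X' \<subseteq> sp Y"
      using less.prems(3) y(1) span_superset[of Y] by (auto simp: X'_def)
    ultimately show ?thesis
      using less.hyps[of X'] indep less.prems(1,4,5) by (simp add: X'_def)
  qed
qed

lemma independent_span_bound:
  assumes "independent P L X" "X \<subseteq> sp Y" "finite Y" "Y \<subseteq> P"
  shows "finite X" "card X \<le> card Y"
proof -
  show "finite X"
  proof (rule ccontr)
    assume "infinite X"
    then obtain X0 where X0: "X0 \<subseteq> X" "card X0 = Suc (card Y)" "finite X0"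
      using infinite_arbitrarily_large by blast
    then have "card X0 \<le> card Y"
      using assms by (intro independent_span_bound_finite independent_subset[OF assms(1)]) auto
    then show False
      using X0(2) by simp
  qed
  then show "card X \<le> card Y"
    using assms independent_span_bound_finite by blast
qed

lemma span_Int_subset_span_Diff:
  assumes I: "independent P L I" and "X \<subseteq> I" "Y \<subseteq> I" "x \<notin> Y"
  shows "sp X \<inter> sp Y \<subseteq> sp (X - {x})"
proof
  fix p assume p: "p \<in> sp X \<inter> sp Y"
  show "p \<in> sp (X - {x})"
  proof (rule ccontr)
    assume p_notin: "p \<notin> sp (X - {x})"
    have IP: "I \<subseteq> P"
      using I by (rule independent_subset_carrier)
    have x: "x \<in> X"
    proof (rule ccontr)
      assume "x \<notin> X"
      then have "X - {x} = X"
        by blast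
      then show False
        using p p_notin by simp
    qed
    have XP: "X \<subseteq> P"
      using assms(2) IP by blast
    have "x \<in> P - sp (X - {x})"
      using x XP independent_not_in_span[OF I, of x "X - {x}"] assms(2) by blast
    moreover have "p \<in> P - sp (X - {x})"
      using XP span_subset_carrier[of X] p p_notin by blast
    moreover have "p \<in> sp (insert x (X - {x}))"
      using p x by (simp add: insert_absorb)
    ultimately have "x \<in> sp (insert p (X - {x}))"
      using exchange_point[of "X - {x}" x p] XP by blast
    moreover have "insert p (X - {x}) \<subseteq> sp ((X - {x}) \<union> Y)"
      using p span_superset[of "(X - {x}) \<union> Y"]
        span_mono[of Y "(X - {x}) \<union> Y"] by blast
    then have "sp (insert p (X - {x})) \<subseteq> sp ((X - {x}) \<union> Y)"
      using assms(3) XP IP by (intro span_subset_spanI) auto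
    moreover have "x \<notin> sp ((X - {x}) \<union> Y)"
      using assms x by (intro independent_not_in_span[OF I]) auto
    ultimately show False
      by blast
  qed
qed

lemma span_Int:
  assumes I: "independent P L I" and "finite X" "X \<subseteq> I" "Y \<subseteq> I"
  shows "sp X \<inter> sp Y = sp (X \<inter> Y)"
proof -
  have step: "sp ((X \<inter> Y) \<union> D) \<inter> sp Y = sp (X \<inter> Y)" if "finite D" "D \<subseteq> I - Y" for D
    using that
  proof (induction D rule: finite_induct)
    case empty
    then show ?case
      using span_mono[of "X \<inter> Y" Y] by auto
  next
    case (insert d D)
    have "sp ((X \<inter> Y) \<union> insert d D) \<inter> sp Y \<subseteq> sp ((X \<inter> Y) \<union> insert d D - {d})"
      using insert.prems assms by (intro span_Int_subset_span_Diff[OF I]) auto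
    also have "(X \<inter> Y) \<union> insert d D - {d} = (X \<inter> Y) \<union> D"
      using insert.hyps(2) insert.prems by auto
    finally have "sp ((X \<inter> Y) \<union> insert d D) \<inter> sp Y \<subseteq> sp (X \<inter> Y)"
      using insert.IH insert.prems by auto
    moreover have "sp (X \<inter> Y) \<subseteq> sp ((X \<inter> Y) \<union> insert d D)" "sp (X \<inter> Y) \<subseteq> sp Y"
      by (rule span_mono, blast)+
    ultimately show ?case
      by blast
  qed
  have "finite (X - Y)" "X - Y \<subseteq> I - Y"
    using assms by auto
  then have "sp ((X \<inter> Y) \<union> (X - Y)) \<inter> sp Y = sp (X \<inter> Y)"
    by (rule step)
  moreover have "(X \<inter> Y) \<union> (X - Y) = X"
    by blast
  ultimately show ?thesis
    by simp
qed

lemma span_INT: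
  assumes I: "independent P L I" and "finite J" "J \<noteq> {}"
    and X: "\<And>j. j \<in> J \<Longrightarrow> finite (X j) \<and> X j \<subseteq> I"
  shows "(\<Inter>j\<in>J. sp (X j)) = sp (\<Inter>j\<in>J. X j)"
  using assms(2-3) X
proof (induction J rule: finite_ne_induct)
  case (singleton j)
  then show ?case
    by simp
next
  case (insert j J)
  have "(\<Inter>i\<in>J. X i) \<subseteq> I"
    using insert by blast
  then have "sp (X j) \<inter> sp (\<Inter>i\<in>J. X i) = sp (X j \<inter> (\<Inter>i\<in>J. X i))"
    using insert.prems by (intro span_Int[OF I]) auto
  then show ?case
    using insert by simp
qed

lemma mem_if_INT_spans_eq_singleton:
  assumes indep: "independent P L B'" and "finite B'" "finite J" "J \<noteq> {}"
    and f: "\<forall>j\<in>J. \<exists>X\<subseteq>B'. sp X = f j" and INT: "(\<Inter>j\<in>J. f j) = {p}"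
  shows "p \<in> B'"
proof -
  obtain g where g: "\<And>j. j \<in> J \<Longrightarrow> g j \<subseteq> B' \<and> sp (g j) = f j"
    using f by metis
  have "(\<Inter>j\<in>J. f j) = (\<Inter>j\<in>J. sp (g j))"
    using g by simp
  also have "\<dots> = sp (\<Inter>j\<in>J. g j)"
    using g assms(2) by (intro span_INT[OF indep assms(3,4)]) (auto intro: finite_subset)
  finally have "sp (\<Inter>j\<in>J. g j) = {p}"
    using INT by simp
  moreover have "(\<Inter>j\<in>J. g j) \<subseteq> B'"
    using g \<open>J \<noteq> {}\<close> by blast
  ultimately show ?thesis
    using span_eq_singletonD independent_subset_carrier[OF indep] by blast
qed

lemma has_dim_span:
  assumes I: "independent P L Z" and "finite Z" "card Z = m + 1"
  shows "has_dim P L (sp Z) m"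
proof -
  have Z: "Z \<subseteq> P"
    using I by (rule independent_subset_carrier)
  have "m + 1 \<le> card X" if "X \<subseteq> P" "finite X" "sp X = sp Z" for X
  proof -
    have "Z \<subseteq> sp X"
      using that(3) span_superset[of Z] by simp
    then show ?thesis
      using independent_span_bound(2)[OF I _ that(2,1)] assms(3) by simp
  qed
  then show ?thesis
    unfolding has_dim_def using subspace_span[OF Z] Z assms(2,3) by blast
qed

lemma has_dim_span_iff:
  assumes I: "independent P L Z" and "finite Z"
  shows "has_dim P L (sp Z) m \<longleftrightarrow> card Z = m + 1"
proof
  assume dim: "has_dim P L (sp Z) m"
  then obtain X where X: "X \<subseteq> P" "finite X" "card X = m + 1" "sp X = sp Z"
    unfolding has_dim_def by blast
  have "Z \<subseteq> sp X"
    using X(4) span_superset[of Z] by simp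
  then have "card Z \<le> card X"
    using independent_span_bound(2)[OF I _ X(2,1)] by simp
  moreover have "m + 1 \<le> card Z"
    using dim assms(2) independent_subset_carrier[OF I] unfolding has_dim_def by blast
  ultimately show "card Z = m + 1"
    using X(3) by simp
next
  assume "card Z = m + 1"
  then show "has_dim P L (sp Z) m"
    by (rule has_dim_span[OF assms])
qed

lemma finite_base:
  assumes "is_base P L B" "finite B" "is_base P L B'"
  shows "finite B'"
  using assms independent_span_bound(1)[of B' B] independent_subset_carrier
  unfolding is_base_def by blast

lemma base_eq_if_subset:
  assumes "is_base P L B" "is_base P L B'" "B \<subseteq> B'"
  shows "B = B'"
  using assms unfolding is_base_def independent_def by blast

lemma base_exchange:
  assumes base: "is_base P L B" and "a \<in> B" "q \<in> P" "q \<notin> sp (B - {a})"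
  shows "is_base P L (insert q (B - {a}))"
  unfolding is_base_def
proof
  have indep: "independent P L B"
    using base unfolding is_base_def by blast
  then show "independent P L (insert q (B - {a}))"
    using assms by (intro independent_insert independent_subset[OF indep]) auto
  have "sp (insert q (B - {a})) = sp (insert a (B - {a}))"
  proof (rule span_insert_exchange)
    show "a \<in> P - sp (B - {a})"
      using independent_not_in_span[OF indep \<open>a \<in> B\<close>, of "B - {a}"]
        independent_subset_carrier[OF indep] \<open>a \<in> B\<close> by blast
    show "q \<in> sp (insert a (B - {a}))"
      using base \<open>a \<in> B\<close> \<open>q \<in> P\<close> unfolding is_base_def by (simp add: insert_absorb)
  qed (use assms independent_subset_carrier[OF indep] in auto)
  then show "sp (insert q (B - {a})) = P"
    using base \<open>a \<in> B\<close> unfolding is_base_def by (simp add: insert_absorb)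
qed

lemma third_point_in_span_pair:
  assumes "axiom_P2 L" "a \<in> P" "b \<in> P" "a \<noteq> b"
  obtains q where "q \<in> sp {a, b}" "q \<noteq> a" "q \<noteq> b"
proof -
  have "\<forall>p\<in>P. \<forall>q\<in>P. p \<noteq> q \<longrightarrow> (\<exists>!l. l \<in> L \<and> p \<in> l \<and> q \<in> l)"
    using linear unfolding linear_space_def by (rule conjunct2)
  then obtain l where l: "l \<in> L" "a \<in> l" "b \<in> l"
    using assms(2-4) by blast
  have "subspace P L (sp {a, b})"
    using assms(2,3) by (intro subspace_span) blast
  moreover have "a \<in> sp {a, b}" "b \<in> sp {a, b}"
    using span_superset[of "{a, b}"] by auto
  ultimately have "l \<subseteq> sp {a, b}"
    using l assms(4) unfolding subspace_def by blast
  moreover obtain x y z where "x \<in> l" "y \<in> l" "z \<in> l" "x \<noteq> y" "x \<noteq> z" "y \<noteq> z"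
    using assms(1) l(1) unfolding axiom_P2_def by blast
  then have "\<exists>q\<in>l. q \<noteq> a \<and> q \<noteq> b"
    by metis
  ultimately show thesis
    using that by blast
qed

end

section \<open>Complement subsets of a base subset\<close>

locale based_space = exchange_space +
  fixes B :: "'a set" and n k :: nat
  assumes base: "is_base P L B" and finite_B: "finite B" and card_B: "card B = n + 1"
    and k_pos: "0 < k" and k_less: "k < n - 1"
begin

abbreviation Bk :: "'a set set" where "Bk \<equiv> base_subset P L k B"

lemma independent_B: "independent P L B"
  using base unfolding is_base_def by blast

lemma B_subset_carrier: "B \<subseteq> P"
  using independent_B by (rule independent_subset_carrier)

lemma B_Diff_singleton_nonempty: "B - {i} \<noteq> {}"
proof -
  have "card B - 1 \<le> card (B - {i})"
    using diff_card_le_card_Diff[of "{i}" B] by simp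
  then have "0 < card (B - {i})"
    using card_B k_less by linarith
  then show ?thesis
    by (metis card.empty less_irrefl)
qed

lemma span_Int_B: "X \<subseteq> B \<Longrightarrow> sp X \<inter> B = X"
  using span_superset[of X] independent_not_in_span[OF independent_B]
  by blast

lemma mem_Bk_iff: "U \<in> Bk \<longleftrightarrow> (\<exists>X. X \<subseteq> B \<and> card X = k + 1 \<and> U = sp X)"
proof -
  have "has_dim P L (sp X) k \<longleftrightarrow> card X = k + 1" if "X \<subseteq> B" for X
    using that finite_B by (intro has_dim_span_iff independent_subset[OF independent_B])
      (auto intro: finite_subset)
  then show ?thesis
    unfolding base_subset_def grass_def by blast
qed

lemma mem_BkD:
  assumes "U \<in> Bk"
  shows "card (U \<inter> B) = k + 1" "sp (U \<inter> B) = U"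
  using assms span_Int_B unfolding mem_Bk_iff by auto

definition through_avoiding :: "'a \<Rightarrow> 'a \<Rightarrow> 'a set set" where
  "through_avoiding a b = {U \<in> Bk. a \<in> U \<and> b \<notin> U}"

lemma span_mem_through_avoiding_iff:
  assumes "X \<subseteq> B" "card X = k + 1" "a \<in> B" "b \<in> B"
  shows "sp X \<in> through_avoiding a b \<longleftrightarrow> a \<in> X \<and> b \<notin> X"
  using assms span_Int_B[OF assms(1)] mem_Bk_iff unfolding through_avoiding_def by blast

lemma through_avoiding_not_subset:
  assumes "(a, b) \<in> B \<times> B - Id" "(c, d) \<in> B \<times> B - Id" "(a, b) \<noteq> (c, d)"
  shows "\<not> through_avoiding c d \<subseteq> through_avoiding a b"
proof -
  \<comment> \<open>a (k+1)-subset of B through c, avoiding d, and avoiding a or through b\<close>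
  obtain In Out where io: "In \<subseteq> B - Out" "Out \<subseteq> B" "card In \<le> 2" "card Out \<le> 2"
    and "c \<in> In" "d \<in> Out" "a \<in> Out \<or> b \<in> In"
  proof (cases "b = d")
    case True
    then show thesis
      using that[of "{c}" "{a, b}"] assms by (auto simp: card_insert_if)
  next
    case False
    then show thesis
      using that[of "{c, b}" "{d}"] assms by (auto simp: card_insert_if)
  qed
  moreover have "card In \<le> k + 1" "k + 1 \<le> card (B - Out)"
    using io k_pos k_less card_B finite_B by (auto simp: card_Diff_subset finite_subset)
  ultimately obtain X where "In \<subseteq> X" "X \<subseteq> B - Out" and X: "card X = k + 1"
    using exists_subset_between[of In "k + 1" "B - Out"] finite_B by auto
  then have "X \<subseteq> B" "c \<in> X" "d \<notin> X" "a \<notin> X \<or> b \<in> X"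
    using \<open>c \<in> In\<close> \<open>d \<in> Out\<close> \<open>a \<in> Out \<or> b \<in> In\<close> by auto
  then have "sp X \<in> through_avoiding c d" "sp X \<notin> through_avoiding a b"
    using assms span_mem_through_avoiding_iff[OF _ X] by auto
  then show ?thesis
    by blast
qed

lemma inj_on_through_avoiding: "inj_on (case_prod through_avoiding) (B \<times> B - Id)"
  using through_avoiding_not_subset by (intro inj_onI) fastforce

lemma INT_through_avoiding_choice:
  assumes "i \<in> B" "\<forall>j\<in>B - {i}. f j \<in> through_avoiding i j"
  shows "(\<Inter>j\<in>B - {i}. f j) = {i}"
proof -
  have f: "f j \<in> Bk" "i \<in> f j \<inter> B" "j \<notin> f j" if "j \<in> B - {i}" for j
    using assms that unfolding through_avoiding_def by auto
  have "(\<Inter>j\<in>B - {i}. f j) = (\<Inter>j\<in>B - {i}. sp (f j \<inter> B))"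
    using f(1) mem_BkD(2) by simp
  also have "\<dots> = sp (\<Inter>j\<in>B - {i}. f j \<inter> B)"
    using finite_B B_Diff_singleton_nonempty by (intro span_INT[OF independent_B]) auto
  also have "(\<Inter>j\<in>B - {i}. f j \<inter> B) = {i}"
    using f(2,3) B_Diff_singleton_nonempty by blast
  finally show ?thesis
    using span_singleton B_subset_carrier \<open>i \<in> B\<close> by auto
qed

lemma exact_if_meets_through_avoiding:
  assumes "S \<subseteq> Bk" and meets: "\<forall>(a, b)\<in>B \<times> B - Id. S \<inter> through_avoiding a b \<noteq> {}"
  shows "exact P L k B S"
  unfolding exact_def
proof (intro conjI allI impI)
  fix B' assume B': "is_base P L B' \<and> S \<subseteq> base_subset P L k B'"
  have "B \<subseteq> B'"
  proof
    fix i assume "i \<in> B"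
    then have "\<forall>j\<in>B - {i}. \<exists>U. U \<in> S \<inter> through_avoiding i j"
      using meets by blast
    then obtain f where f: "\<forall>j\<in>B - {i}. f j \<in> S \<inter> through_avoiding i j"
      by metis
    have "\<forall>j\<in>B - {i}. \<exists>X\<subseteq>B'. sp X = f j"
      using f B' unfolding base_subset_def by blast
    moreover have "(\<Inter>j\<in>B - {i}. f j) = {i}"
      using f \<open>i \<in> B\<close> by (intro INT_through_avoiding_choice) auto
    ultimately show "i \<in> B'"
      using B' finite_base[OF base finite_B] finite_B B_Diff_singleton_nonempty
      by (intro mem_if_INT_spans_eq_singleton[of B' "B - {i}" f]) (auto simp: is_base_def)
  qed
  then show "base_subset P L k B' = Bk"
    using base_eq_if_subset[OF base] B' by blast
qed (rule assms(1))

lemma pair_subset_if_third_point_in_span: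
  assumes "a \<in> B" "b \<in> B" "q \<in> sp {a, b}" "q \<noteq> a" "q \<noteq> b" "Y \<subseteq> B" "q \<in> sp Y"
  shows "{a, b} \<subseteq> Y"
proof (rule ccontr)
  assume "\<not> {a, b} \<subseteq> Y"
  then obtain c where c: "c \<in> {a, b}" "{a, b} \<inter> Y \<subseteq> {c}"
    by blast
  have "sp {a, b} \<inter> sp Y = sp ({a, b} \<inter> Y)"
    using assms(1,2,6) by (intro span_Int[OF independent_B]) auto
  also have "\<dots> \<subseteq> sp {c}"
    using c(2) by (rule span_mono)
  also have "\<dots> = {c}"
    using c(1) assms(1,2) B_subset_carrier by (intro span_singleton) auto
  finally show False
    using assms(3-5,7) c(1) by blast
qed

lemma exchanged_is_base:
  assumes ab: "(a, b) \<in> B \<times> B - Id" and q: "q \<in> sp {a, b}" "q \<noteq> a" "q \<noteq> b"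
  shows "is_base P L (insert q (B - {a}))"
proof (rule base_exchange[OF base])
  show "a \<in> B"
    using ab by blast
  show "q \<in> P"
    using q(1) ab B_subset_carrier span_subset_carrier[of "{a, b}"] by blast
  show "q \<notin> sp (B - {a})"
    using pair_subset_if_third_point_in_span[of a b q "B - {a}"] ab q by blast
qed

lemma Bk_Diff_through_avoiding_subset_exchanged:
  assumes ab: "(a, b) \<in> B \<times> B - Id" and q: "q \<in> sp {a, b}" "q \<noteq> a" "q \<noteq> b"
  shows "Bk - through_avoiding a b \<subseteq> base_subset P L k (insert q (B - {a}))"
proof
  fix U assume U: "U \<in> Bk - through_avoiding a b"
  define X where "X = U \<inter> B"
  have X: "X \<subseteq> B" "sp X = U"
    using U mem_BkD(2) unfolding X_def by auto
  have "\<exists>Y\<subseteq>insert q (B - {a}). sp Y = U"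
  proof (cases "a \<in> X")
    case False
    then show ?thesis
      using X by blast
  next
    case True
    then have "{a, b} \<subseteq> X"
      using U ab unfolding X_def through_avoiding_def by blast
    then have "q \<in> sp (insert a (X - {a}))"
      using q(1) span_mono[of "{a, b}" X] \<open>a \<in> X\<close> by (simp add: insert_absorb) blast
    moreover have "a \<in> P - sp (X - {a})" "X - {a} \<subseteq> P"
      using True X(1) B_subset_carrier independent_not_in_span[OF independent_B, of a "X - {a}"]
      by blast+
    moreover have "q \<in> P - sp (X - {a})"
      using pair_subset_if_third_point_in_span[of a b q "X - {a}"] ab q X(1)
        span_subset_carrier[of "{a, b}"] B_subset_carrier by blast
    ultimately have "sp (insert q (X - {a})) = sp (insert a (X - {a}))"
      by (intro span_insert_exchange)
    then have "sp (insert q (X - {a})) = U"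
      using True X(2) by (simp add: insert_absorb)
    moreover have "insert q (X - {a}) \<subseteq> insert q (B - {a})"
      using X(1) by blast
    ultimately show ?thesis
      by blast
  qed
  then show "U \<in> base_subset P L k (insert q (B - {a}))"
    using U unfolding base_subset_def by blast
qed

lemma exchanged_base_subset_not_subset_Bk:
  assumes ab: "(a, b) \<in> B \<times> B - Id" and q: "q \<in> sp {a, b}" "q \<noteq> a" "q \<noteq> b"
  shows "\<not> base_subset P L k (insert q (B - {a})) \<subseteq> Bk"
proof
  let ?B' = "insert q (B - {a})"
  assume sub: "base_subset P L k ?B' \<subseteq> Bk"
  \<comment> \<open>a base (k+1)-set spanning span (insert q Z) would have to contain Z, a and b\<close>
  have "k \<le> card (B - {a, b})"
    using ab card_B k_less finite_B by (auto simp: card_Diff_subset)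
  then obtain Z where Z: "Z \<subseteq> B - {a, b}" "card Z = k" "finite Z"
    by (rule obtain_subset_with_card_n)
  have "q \<notin> B"
    using q ab span_Int_B[of "{a, b}"] by blast
  then have "q \<notin> Z"
    using Z(1) by blast
  then have "card (insert q Z) = k + 1"
    using Z(2,3) by simp
  moreover have QB': "insert q Z \<subseteq> ?B'"
    using Z(1) by blast
  moreover have "independent P L (insert q Z)"
    using exchanged_is_base[OF assms] QB' unfolding is_base_def
    by (blast intro: independent_subset)
  ultimately have "sp (insert q Z) \<in> Bk"
    using sub has_dim_span[of "insert q Z" k] Z(3) unfolding base_subset_def grass_def by blast
  then obtain Y where Y: "Y \<subseteq> B" "card Y = k + 1" "sp (insert q Z) = sp Y"
    unfolding mem_Bk_iff by blast
  have "{a, b} \<subseteq> Y"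
    using pair_subset_if_third_point_in_span[OF _ _ q Y(1)] ab Y(3)
      span_superset[of "insert q Z"] by blast
  moreover have "Z \<subseteq> Y"
    using Y span_Int_B[of Y] Z(1) span_superset[of "insert q Z"] by blast
  ultimately have "insert a (insert b Z) \<subseteq> Y"
    by blast
  then have "card (insert a (insert b Z)) \<le> card Y"
    using Y(1) finite_B by (intro card_mono) (auto intro: finite_subset)
  moreover have "a \<notin> insert b Z" "b \<notin> Z"
    using Z(1) ab by blast+
  then have "card (insert a (insert b Z)) = k + 2"
    using Z(2,3) by simp
  ultimately show False
    using Y(2) by simp
qed

lemma inexact_Bk_Diff_through_avoiding:
  assumes P2: "axiom_P2 L" and ab: "(a, b) \<in> B \<times> B - Id"
  shows "inexact P L k B (Bk - through_avoiding a b)"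
proof -
  obtain q where q: "q \<in> sp {a, b}" "q \<noteq> a" "q \<noteq> b"
    using third_point_in_span_pair[OF P2] ab B_subset_carrier by blast
  show ?thesis
    unfolding inexact_def exact_def
    using exchanged_is_base[OF ab q] Bk_Diff_through_avoiding_subset_exchanged[OF ab q]
      exchanged_base_subset_not_subset_Bk[OF ab q] by blast
qed

lemma exact_iff_meets_through_avoiding:
  assumes P2: "axiom_P2 L" and "S \<subseteq> Bk"
  shows "exact P L k B S \<longleftrightarrow> (\<forall>(a, b)\<in>B \<times> B - Id. S \<inter> through_avoiding a b \<noteq> {})"
proof
  assume exact: "exact P L k B S"
  show "\<forall>(a, b)\<in>B \<times> B - Id. S \<inter> through_avoiding a b \<noteq> {}"
  proof (intro ballI, clarify)
    fix a b assume ab: "a \<in> B" "b \<in> B" "a \<noteq> b" and "S \<inter> through_avoiding a b = {}"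
    then have "S \<subseteq> Bk - through_avoiding a b"
      using assms(2) by blast
    then have "exact P L k B (Bk - through_avoiding a b)"
      by (rule exact_mono[OF exact]) blast
    then show False
      using inexact_Bk_Diff_through_avoiding[OF P2] ab unfolding inexact_def by blast
  qed
qed (rule exact_if_meets_through_avoiding[OF assms(2)])

lemma complement_subset_through_avoiding:
  assumes P2: "axiom_P2 L" and ab: "(a, b) \<in> B \<times> B - Id"
  shows "complement_subset P L k B (through_avoiding a b)"
proof -
  let ?R = "through_avoiding a b"
  have exact_above: "exact P L k B S" if S: "Bk - ?R \<subset> S" "S \<subseteq> Bk" for S
  proof (rule exact_if_meets_through_avoiding[OF S(2)], intro ballI, clarify)
    fix c d assume cd: "c \<in> B" "d \<in> B" "c \<noteq> d" and empty: "S \<inter> through_avoiding c d = {}"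
    show False
    proof (cases "(c, d) = (a, b)")
      case True
      then show False
        using S empty by blast
    next
      case False
      have "through_avoiding c d \<subseteq> Bk - S"
        using empty unfolding through_avoiding_def by blast
      also have "\<dots> \<subseteq> ?R"
        using S by blast
      finally show False
        using through_avoiding_not_subset[OF ab] cd False by blast
    qed
  qed
  then show ?thesis
    unfolding complement_subset_def maximal_inexact_def
  proof (intro conjI allI impI)
    show "?R \<subseteq> Bk"
      unfolding through_avoiding_def by blast
    show "inexact P L k B (Bk - ?R)"
      by (rule inexact_Bk_Diff_through_avoiding[OF P2 ab])
    fix R' assume "Bk - ?R \<subset> R' \<and> R' \<subseteq> Bk"
    then show "\<not> inexact P L k B R'"
      using exact_above unfolding inexact_def by blast
  qed
qed

lemma complement_subset_iff:
  assumes P2: "axiom_P2 L"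
  shows "complement_subset P L k B R \<longleftrightarrow> R \<in> case_prod through_avoiding ` (B \<times> B - Id)"
proof
  assume "complement_subset P L k B R"
  then have "R \<subseteq> Bk" and max: "maximal_inexact P L k B (Bk - R)"
    unfolding complement_subset_def by blast+
  then have "\<not> exact P L k B (Bk - R)"
    unfolding maximal_inexact_def inexact_def by blast
  then obtain a b where ab: "(a, b) \<in> B \<times> B - Id" "(Bk - R) \<inter> through_avoiding a b = {}"
    using exact_iff_meets_through_avoiding[OF P2, of "Bk - R"] by blast
  then have "through_avoiding a b \<subseteq> R"
    unfolding through_avoiding_def by blast
  moreover have "\<not> Bk - R \<subset> Bk - through_avoiding a b"
    using max inexact_Bk_Diff_through_avoiding[OF P2 ab(1)] unfolding maximal_inexact_def by blast
  ultimately have "R = through_avoiding a b"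
    using \<open>R \<subseteq> Bk\<close> by blast
  then show "R \<in> case_prod through_avoiding ` (B \<times> B - Id)"
    using ab(1) by force
next
  assume "R \<in> case_prod through_avoiding ` (B \<times> B - Id)"
  then obtain a b where "(a, b) \<in> B \<times> B - Id" "R = through_avoiding a b"
    by blast
  then show "complement_subset P L k B R"
    using complement_subset_through_avoiding[OF P2] by blast
qed

section \<open>Adjacency and regular collections\<close>

lemma INT_through_avoiding:
  assumes "T \<subseteq> B \<times> B" "T \<noteq> {}"
  shows "(\<Inter>(a, b)\<in>T. through_avoiding a b) =
    sp ` {Y. Y \<subseteq> B \<and> card Y = k + 1 \<and> fst ` T \<subseteq> Y \<and> Y \<inter> snd ` T = {}}"
    (is "_ = sp ` ?Y")
proof (intro equalityI subsetI)
  fix V assume V: "V \<in> (\<Inter>(a, b)\<in>T. through_avoiding a b)"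
  then have "V \<in> Bk"
    using \<open>T \<noteq> {}\<close> unfolding through_avoiding_def by blast
  have "a \<in> V \<and> b \<notin> V" if "(a, b) \<in> T" for a b
    using V that unfolding through_avoiding_def by blast
  then have "V \<inter> B \<in> ?Y"
    using assms(1) mem_BkD(1)[OF \<open>V \<in> Bk\<close>] by force
  then show "V \<in> sp ` ?Y"
    using mem_BkD(2)[OF \<open>V \<in> Bk\<close>, symmetric] by (rule rev_image_eqI)
next
  fix V assume "V \<in> sp ` ?Y"
  then obtain Y where "V = sp Y" "Y \<in> ?Y"
    by (rule imageE)
  have "sp Y \<in> through_avoiding a b" if "(a, b) \<in> T" for a b
  proof -
    have "a \<in> fst ` T" "b \<in> snd ` T" "a \<in> B" "b \<in> B"
      using that assms(1) by force+
    then show ?thesis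
      using \<open>Y \<in> ?Y\<close> span_mem_through_avoiding_iff[of Y] by blast
  qed
  then show "V \<in> (\<Inter>(a, b)\<in>T. through_avoiding a b)"
    using \<open>V = sp Y\<close> by blast
qed

lemma INT_through_avoiding_eq_singleton:
  assumes "T \<subseteq> B \<times> B" "fst ` T = X" "X \<inter> snd ` T = {}" "card X = k + 1"
  shows "(\<Inter>(a, b)\<in>T. through_avoiding a b) = {sp X}"
proof -
  have "T \<noteq> {}"
    using assms(2,4) by auto
  have "X \<subseteq> B"
    using assms(1,2) by auto
  have "Y = X" if "Y \<subseteq> B" "card Y = k + 1" "X \<subseteq> Y" for Y
    using card_subset_eq[of Y X] that assms(4) finite_B finite_subset by metis
  then have "{Y. Y \<subseteq> B \<and> card Y = k + 1 \<and> X \<subseteq> Y \<and> Y \<inter> snd ` T = {}} = {X}"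
    using \<open>X \<subseteq> B\<close> assms(3,4) by auto
  then show ?thesis
    using INT_through_avoiding[OF assms(1) \<open>T \<noteq> {}\<close>] assms(2) by simp
qed

lemma INT_through_avoiding_not_singleton:
  assumes "T \<subseteq> B \<times> B" "T \<noteq> {}" "card (fst ` T) \<le> k" "card (snd ` T) + k + 2 \<le> card B"
  shows "(\<Inter>(a, b)\<in>T. through_avoiding a b) \<noteq> {V}"
proof
  let ?Y = "{Y. Y \<subseteq> B \<and> card Y = k + 1 \<and> fst ` T \<subseteq> Y \<and> Y \<inter> snd ` T = {}}"
  assume "(\<Inter>(a, b)\<in>T. through_avoiding a b) = {V}"
  then have sp_Y: "sp ` ?Y = {V}"
    unfolding INT_through_avoiding[OF assms(1,2)] .
  have "V \<in> sp ` ?Y"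
    unfolding sp_Y by simp
  then obtain Y0 where "Y0 \<in> ?Y"
    by (rule imageE)
  then have "fst ` T \<subseteq> B - snd ` T"
    by blast
  moreover have "snd ` T \<subseteq> B"
    using assms(1) by auto
  then have "card (B - snd ` T) = card B - card (snd ` T)"
    using finite_B by (intro card_Diff_subset) (auto intro: finite_subset)
  then have "card (fst ` T) < k + 1" "k + 1 < card (B - snd ` T)"
    using assms(3,4) by linarith+
  moreover have "finite (B - snd ` T)"
    using finite_B by blast
  ultimately obtain Y1 Y2 where "Y1 \<noteq> Y2" "fst ` T \<subseteq> Y1" "Y1 \<subseteq> B - snd ` T" "card Y1 = k + 1"
    "fst ` T \<subseteq> Y2" "Y2 \<subseteq> B - snd ` T" "card Y2 = k + 1"
    using two_subsets_between by metis
  then have "sp Y1 \<in> sp ` ?Y" "sp Y2 \<in> sp ` ?Y"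
    by blast+
  then have "sp Y1 = V" "sp Y2 = V"
    unfolding sp_Y by simp_all
  moreover have "Y1 \<subseteq> B" "Y2 \<subseteq> B"
    using \<open>Y1 \<subseteq> B - snd ` T\<close> \<open>Y2 \<subseteq> B - snd ` T\<close> by blast+
  ultimately show False
    using \<open>Y1 \<noteq> Y2\<close> span_Int_B by metis
qed

lemma adjacent_iff_card_Int:
  assumes "U \<in> Bk" "U' \<in> Bk"
  shows "adjacent P L k U U' \<longleftrightarrow> card (U \<inter> U' \<inter> B) = k"
proof -
  have "U \<inter> U' = sp (U \<inter> B) \<inter> sp (U' \<inter> B)"
    using mem_BkD(2) assms by simp
  also have "\<dots> = sp ((U \<inter> B) \<inter> (U' \<inter> B))"
    using finite_B by (intro span_Int[OF independent_B]) auto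
  also have "(U \<inter> B) \<inter> (U' \<inter> B) = U \<inter> U' \<inter> B"
    by blast
  finally have eq: "U \<inter> U' = sp (U \<inter> U' \<inter> B)" .
  have "has_dim P L (sp (U \<inter> U' \<inter> B)) (k - 1) \<longleftrightarrow> card (U \<inter> U' \<inter> B) = k - 1 + 1"
    using finite_B by (intro has_dim_span_iff independent_subset[OF independent_B]) auto
  then show ?thesis
    using eq assms k_pos unfolding adjacent_def base_subset_def grass_def by auto
qed

lemma card_B_Diff_Un:
  assumes "U \<in> Bk" "U' \<in> Bk"
  shows "card (B - (U \<union> U')) + 2 * k + 2 = n + 1 + card (U \<inter> U' \<inter> B)"
proof -
  have "card (U \<inter> B) + card (U' \<inter> B) = card ((U \<inter> B) \<union> (U' \<inter> B)) + card ((U \<inter> B) \<inter> (U' \<inter> B))"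
    using finite_B by (intro card_Un_Int) auto
  moreover have "(U \<inter> B) \<union> (U' \<inter> B) = B \<inter> (U \<union> U')" "(U \<inter> B) \<inter> (U' \<inter> B) = U \<inter> U' \<inter> B"
    by blast+
  moreover have "card B = card (B \<inter> (U \<union> U')) + card (B - (U \<union> U'))"
    using finite_B by (rule card_Int_Diff)
  ultimately show ?thesis
    using mem_BkD(1) assms card_B by simp
qed

lemma card_Int_le_if_ne:
  assumes "U \<in> Bk" "U' \<in> Bk" "U \<noteq> U'"
  shows "card (U \<inter> U' \<inter> B) \<le> k"
proof -
  have "\<not> U \<inter> B \<subseteq> U' \<inter> B"
  proof
    assume "U \<inter> B \<subseteq> U' \<inter> B"
    then have "U \<inter> B = U' \<inter> B"
      using card_subset_eq[of "U' \<inter> B" "U \<inter> B"] finite_B mem_BkD(1)[OF assms(1)]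
        mem_BkD(1)[OF assms(2)] by simp
    then show False
      using assms(3) mem_BkD(2)[OF assms(1)] mem_BkD(2)[OF assms(2)] by metis
  qed
  then have "U \<inter> U' \<inter> B \<subset> U \<inter> B"
    by blast
  then have "card (U \<inter> U' \<inter> B) < card (U \<inter> B)"
    using finite_B by (intro psubset_card_mono) auto
  then show ?thesis
    using mem_BkD(1)[OF assms(1)] by simp
qed

lemma regular_pairsE:
  assumes P2: "axiom_P2 L" and "regular P L k B m C"
  obtains T p0 V where "T \<subseteq> B \<times> B - Id" "p0 \<in> T" "(\<Inter>(a, b)\<in>T. through_avoiding a b) = {V}"
    "\<And>p. p \<in> T \<Longrightarrow> p \<noteq> p0 \<Longrightarrow> case_prod through_avoiding p \<in> C"
proof -
  let ?F = "case_prod through_avoiding"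
  obtain R0 V where R0: "complement_subset P L k B R0" "\<Inter>(insert R0 C) = {V}"
    and C: "\<forall>R\<in>C. complement_subset P L k B R"
    using assms(2) unfolding regular_def regular_full_def by blast
  define T where "T = {p \<in> B \<times> B - Id. ?F p \<in> insert R0 C}"
  have TB: "T \<subseteq> B \<times> B - Id"
    unfolding T_def by blast
  have T: "insert R0 C = ?F ` T"
  proof (intro equalityI subsetI)
    fix R assume R: "R \<in> insert R0 C"
    then have "R \<in> ?F ` (B \<times> B - Id)"
      using R0(1) C complement_subset_iff[OF P2] by blast
    then obtain p where "R = ?F p" "p \<in> B \<times> B - Id"
      by (rule imageE)
    then show "R \<in> ?F ` T"
      using R unfolding T_def by blast
  next
    fix R assume "R \<in> ?F ` T"
    then show "R \<in> insert R0 C"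
      unfolding T_def by blast
  qed
  then have INT: "(\<Inter>(a, b)\<in>T. through_avoiding a b) = {V}"
    using R0(2) by simp
  have "R0 \<in> ?F ` T"
    using T by blast
  then obtain p0 where p0: "p0 \<in> T" "R0 = ?F p0"
    by (rule imageE)
  have "?F p \<in> C" if "p \<in> T" "p \<noteq> p0" for p
  proof -
    have "p \<in> B \<times> B - Id" "p0 \<in> B \<times> B - Id"
      using that(1) p0(1) TB by blast+
    then have "?F p \<noteq> ?F p0"
      using inj_onD[OF inj_on_through_avoiding] that(2) by metis
    then show ?thesis
      using that(1) p0(2) unfolding T_def by blast
  qed
  then show thesis
    by (rule that[OF TB p0(1) INT])
qed

lemma regular_imp_card_Int:
  assumes P2: "axiom_P2 L" and U: "U \<in> Bk" "U' \<in> Bk" "U \<noteq> U'"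
    and C: "regular P L k B m C" "\<forall>R\<in>C. U \<in> R \<and> U' \<in> R"
  shows "card (U \<inter> U' \<inter> B) = k"
proof (rule ccontr)
  assume "card (U \<inter> U' \<inter> B) \<noteq> k"
  then have small: "card (U \<inter> U' \<inter> B) < k"
    using card_Int_le_if_ne[OF U] by simp
  obtain T p0 V where T: "T \<subseteq> B \<times> B - Id" "p0 \<in> T"
    and INT: "(\<Inter>(a, b)\<in>T. through_avoiding a b) = {V}"
    and in_C: "\<And>p. p \<in> T \<Longrightarrow> p \<noteq> p0 \<Longrightarrow> case_prod through_avoiding p \<in> C"
    using regular_pairsE[OF P2 C(1)] by blast
  have "a \<in> insert (fst p0) (U \<inter> U' \<inter> B) \<and> b \<in> insert (snd p0) (B - (U \<union> U'))"
    if "(a, b) \<in> T" for a b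
  proof (cases "(a, b) = p0")
    case False
    then have "U \<in> through_avoiding a b" "U' \<in> through_avoiding a b"
      using in_C[OF that] C(2) by auto
    moreover have "a \<in> B" "b \<in> B"
      using that T(1) by blast+
    ultimately show ?thesis
      unfolding through_avoiding_def by blast
  qed force
  then have "fst ` T \<subseteq> insert (fst p0) (U \<inter> U' \<inter> B)" "snd ` T \<subseteq> insert (snd p0) (B - (U \<union> U'))"
    by force+
  then have "card (fst ` T) \<le> card (U \<inter> U' \<inter> B) + 1" "card (snd ` T) \<le> card (B - (U \<union> U')) + 1"
    using finite_B by (blast intro: card_subset_insert_le finite_subset)+
  then have "card (fst ` T) \<le> k" "card (snd ` T) + k + 2 \<le> card B"
    using small card_B_Diff_Un[OF U(1,2)] card_B by linarith+
  moreover have "T \<subseteq> B \<times> B" "T \<noteq> {}"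
    using T(1,2) by blast+
  ultimately show False
    using INT_through_avoiding_not_singleton INT by blast
qed

lemma Int_B_eq_insert_if_card_Int:
  assumes "U \<in> Bk" "card (U \<inter> U' \<inter> B) = k"
  obtains x where "U \<inter> B = insert x (U \<inter> U' \<inter> B)" "x \<notin> U'"
proof -
  have "card ((U \<inter> B) - (U \<inter> U' \<inter> B)) = 1"
    using assms mem_BkD(1) finite_B by (subst card_Diff_subset) auto
  then obtain x where x: "(U \<inter> B) - (U \<inter> U' \<inter> B) = {x}"
    by (auto simp: card_1_singleton_iff)
  then have "U \<inter> B = insert x (U \<inter> U' \<inter> B)" "x \<notin> U'"
    by blast+
  then show thesis
    by (rule that)
qed

lemma regular_image_through_avoiding:
  assumes P2: "axiom_P2 L" and T: "T \<subseteq> B \<times> B - Id" "finite T" "card T = m"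
    and p0: "p0 \<in> B \<times> B - Id" "p0 \<notin> T"
    and INT: "(\<Inter>(a, b)\<in>insert p0 T. through_avoiding a b) = {V}"
  shows "regular P L k B m (case_prod through_avoiding ` T)"
proof -
  let ?F = "case_prod through_avoiding"
  have inj: "inj_on ?F (insert p0 T)"
    by (rule inj_on_subset[OF inj_on_through_avoiding]) (use T(1) p0(1) in blast)
  then have "card (?F ` T) = m" "?F p0 \<notin> ?F ` T"
    using T p0(2) by (auto simp: card_image)
  moreover have "\<forall>R\<in>?F ` insert p0 T. complement_subset P L k B R"
    using T(1) p0(1) complement_subset_iff[OF P2] by blast
  moreover have "\<Inter>(?F ` insert p0 T) = {V}"
    using INT by simp
  ultimately show ?thesis
    unfolding regular_def regular_full_def using T(2) by (intro conjI exI[of _ "?F p0"]) auto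
qed

lemma card_Int_imp_regular:
  assumes P2: "axiom_P2 L" and U: "U \<in> Bk" "U' \<in> Bk" and adj: "card (U \<inter> U' \<inter> B) = k"
  shows "\<exists>C. regular P L k B (max k (n - k - 1)) C \<and> (\<forall>R\<in>C. U \<in> R \<and> U' \<in> R)"
proof -
  define I where "I = U \<inter> U' \<inter> B"
  define J where "J = B - (U \<union> U')"
  define m where "m = max k (n - k - 1)"
  have "card J = n - k - 1"
    using card_B_Diff_Un[OF U] adj unfolding J_def by simp
  then have "0 < card J"
    using k_less by simp
  then obtain b0 where "b0 \<in> J"
    by (auto simp: card_gt_0_iff)
  moreover have "card I \<le> m" "m \<le> card I * card J"
    using adj \<open>card J = n - k - 1\<close> k_pos k_less unfolding I_def m_def by auto
  ultimately obtain T where T: "I \<times> {b0} \<subseteq> T" "T \<subseteq> I \<times> J" "card T = m"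
    using exists_pairs_between[of I J b0 m] finite_B unfolding I_def J_def by auto
  obtain x where x: "U \<inter> B = insert x I" "x \<notin> U'"
    using Int_B_eq_insert_if_card_Int[OF U(1) adj] unfolding I_def by blast
  have "T \<subseteq> B \<times> B - Id"
    using T(2) unfolding I_def J_def by blast
  moreover have "finite T"
    using finite_subset[OF T(2)] finite_B unfolding I_def J_def by simp
  moreover have "(x, b0) \<in> B \<times> B - Id" "(x, b0) \<notin> T"
    using x \<open>b0 \<in> J\<close> T(2) unfolding I_def J_def by auto
  \<comment> \<open>T covers I, so together with (x, b0) its first components are exactly U \<inter> B\<close>
  moreover have "fst ` insert (x, b0) T = U \<inter> B"
    using T(1,2) x(1) by force
  moreover have "U \<inter> B \<inter> snd ` insert (x, b0) T = {}"
    using T(2) \<open>b0 \<in> J\<close> unfolding J_def by force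
  ultimately have "(\<Inter>(a, b)\<in>insert (x, b0) T. through_avoiding a b) = {sp (U \<inter> B)}"
    using mem_BkD(1)[OF U(1)] by (intro INT_through_avoiding_eq_singleton) auto
  then have "regular P L k B m (case_prod through_avoiding ` T)"
    using \<open>T \<subseteq> B \<times> B - Id\<close> \<open>finite T\<close> T(3) \<open>(x, b0) \<in> B \<times> B - Id\<close> \<open>(x, b0) \<notin> T\<close>
    by (intro regular_image_through_avoiding[OF P2])
  moreover have "U \<in> through_avoiding a b \<and> U' \<in> through_avoiding a b" if "(a, b) \<in> T" for a b
    using that T(2) U unfolding I_def J_def through_avoiding_def by blast
  ultimately show ?thesis
    unfolding m_def by blast
qed

end

theorem lemma2p5:
  fixes P :: "'a set" and L :: "'a set set" and n k :: nat and B :: "'a set"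
  assumes "linear_space P L"
    and "has_dim P L P n"
    and "exchange_axiom P L"
    and "axiom_P2 L"
    and "0 < k" and "k < n - 1"
    and "is_base P L B" and "finite B" and "card B = n + 1"
    and "U \<in> base_subset P L k B" and "U' \<in> base_subset P L k B" and "U \<noteq> U'"
  shows "adjacent P L k U U' \<longleftrightarrow>
    (\<exists>C. regular P L k B (max k (n - k - 1)) C \<and> (\<forall>R\<in>C. U \<in> R \<and> U' \<in> R))"
proof -
  interpret based_space P L B n k
    by unfold_locales (fact assms)+
  have "adjacent P L k U U' \<longleftrightarrow> card (U \<inter> U' \<inter> B) = k"
    using assms(10,11) by (rule adjacent_iff_card_Int)
  also have "\<dots> \<longleftrightarrow> (\<exists>C. regular P L k B (max k (n - k - 1)) C \<and> (\<forall>R\<in>C. U \<in> R \<and> U' \<in> R))"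
  proof
    assume "card (U \<inter> U' \<inter> B) = k"
    then show "\<exists>C. regular P L k B (max k (n - k - 1)) C \<and> (\<forall>R\<in>C. U \<in> R \<and> U' \<in> R)"
      by (rule card_Int_imp_regular[OF assms(4,10,11)])
  next
    assume "\<exists>C. regular P L k B (max k (n - k - 1)) C \<and> (\<forall>R\<in>C. U \<in> R \<and> U' \<in> R)"
    then obtain C where "regular P L k B (max k (n - k - 1)) C" "\<forall>R\<in>C. U \<in> R \<and> U' \<in> R"
      by blast
    then show "card (U \<inter> U' \<inter> B) = k"
      by (rule regular_imp_card_Int[OF assms(4,10-12)])
  qed
  finally show ?thesis .
qed

end
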